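(* For every $n\ge 6$ there exist two non-isomorphic graphs $G,H$ on $n$ vertices and a set $\mathcal{F}$ consisting of a single graph of constant order such that, for every number of rounds, $1$-WL does not distinguish $G$ and $H$, while $1$-WL$_{\mathcal{F}}$ distinguishes $G$ and $H$ after a single round.
   Context: Graphs are finite, simple, undirected and unlabeled. $\mathsf{RELABEL}$ is a fixed injective map, shared by all graphs, from pairs (colour, finite multiset of colours) to natural numbers. $1$-WL: $C^1_0$ is constant; $C^1_t(v)=\mathsf{RELABEL}(C^1_{t-1}(v),\{\!\{C^1_{t-1}(u):u\in N(v)\}\!\})$. $1$-WL$_{\mathcal{F}}$: same update, but initial colour $C^{1,\mathcal{F}}_0(v)=(\ell_F(v))_{F\in\mathcal{F}}$ where $\ell_F(v)=1$ if $v$ lies in some vertex set $X$ whose induced subgraph $G[X]$ is isomorphic to $F$ and $0$ otherwise. An algorithm distinguishes $G$ and $H$ after round $t$ if for some round $s\le t$ there is a colour $c$ such that the number of vertices of colour $c$ at round $s$ differs between $G$ and $H$ (colourings computed with the shared $\mathsf{RELABEL}$). *)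

theory Defs
  imports Main "HOL-Library.Multiset"
begin

type_synonym graph = "nat set \<times> nat set set"

definition verts :: "graph \<Rightarrow> nat set" where "verts G = fst G"
definition edges :: "graph \<Rightarrow> nat set set" where "edges G = snd G"

definition simple_graph :: "graph \<Rightarrow> bool" where
  "simple_graph G \<longleftrightarrow> finite (verts G) \<and>
     (\<forall>e\<in>edges G. \<exists>u v. u \<noteq> v \<and> u \<in> verts G \<and> v \<in> verts G \<and> e = {u, v})"

definition nbrs :: "graph \<Rightarrow> nat \<Rightarrow> nat set" where
  "nbrs G v = {u \<in> verts G. {u, v} \<in> edges G}"

definition graph_iso :: "graph \<Rightarrow> graph \<Rightarrow> bool" where
  "graph_iso G H \<longleftrightarrow> (\<exists>f. bij_betw f (verts G) (verts H) \<and>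
     (\<forall>x\<in>verts G. \<forall>y\<in>verts G. {x, y} \<in> edges G \<longleftrightarrow> {f x, f y} \<in> edges H))"

definition in_induced_copy :: "graph \<Rightarrow> graph \<Rightarrow> nat \<Rightarrow> bool" where
  "in_induced_copy F G v \<longleftrightarrow> (\<exists>X. X \<subseteq> verts G \<and> v \<in> X \<and>
     (\<exists>f. bij_betw f X (verts F) \<and>
        (\<forall>x\<in>X. \<forall>y\<in>X. {x, y} \<in> edges G \<longleftrightarrow> {f x, f y} \<in> edges F)))"

text \<open>Colours: initial colours are tuples (lists) of bits; later colours are natural
  numbers produced by RELABEL.\<close>
datatype colour = Tup "bool list" | Num nat

fun wl_col :: "(colour \<times> colour multiset \<Rightarrow> nat) \<Rightarrow> (graph \<Rightarrow> nat \<Rightarrow> colour)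
                 \<Rightarrow> graph \<Rightarrow> nat \<Rightarrow> nat \<Rightarrow> colour" where
  "wl_col R init G 0 v = init G v"
| "wl_col R init G (Suc t) v =
     Num (R (wl_col R init G t v, image_mset (wl_col R init G t) (mset_set (nbrs G v))))"

definition init_plain :: "graph \<Rightarrow> nat \<Rightarrow> colour" where
  "init_plain G v = Tup []"

definition init_F :: "graph list \<Rightarrow> graph \<Rightarrow> nat \<Rightarrow> colour" where
  "init_F Fs G v = Tup (map (\<lambda>F. in_induced_copy F G v) Fs)"

definition distinguishes ::
  "(colour \<times> colour multiset \<Rightarrow> nat) \<Rightarrow> (graph \<Rightarrow> nat \<Rightarrow> colour) \<Rightarrow> graph \<Rightarrow> graph \<Rightarrow> nat \<Rightarrow> bool" where
  "distinguishes R init G H t \<longleftrightarrow> (\<exists>s\<le>t. \<exists>c.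
     card {v \<in> verts G. wl_col R init G s v = c} \<noteq> card {v \<in> verts H. wl_col R init H s v = c})"

end

theory Submission
  imports Defs
begin

text \<open>Take for G the n-cycle and for H the disjoint union of a triangle and an
  (n - 3)-cycle, and let F be the triangle. Both graphs are 2-regular with n vertices, and
  1-WL colours all vertices of a d-regular graph alike in every round, so plain 1-WL never
  tells G and H apart. The initial colour of 1-WL with F records whether a vertex lies on a
  triangle: the vertices of the triangle in H do, while an n-cycle with n \<ge> 4 has no
  triangle, so the colour counts already differ in round 0. Induced copies of F transfer
  along isomorphisms, so the same observation shows that G and H are not isomorphic.\<close>

definition regular :: "graph \<Rightarrow> nat \<Rightarrow> bool" where
  "regular G d \<longleftrightarrow> (\<forall>v\<in>verts G. card (nbrs G v) = d)"

fun regular_wl_col :: "(colour \<times> colour multiset \<Rightarrow> nat) \<Rightarrow> nat \<Rightarrow> nat \<Rightarrow> colour" where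
  "regular_wl_col R d 0 = Tup []"
| "regular_wl_col R d (Suc t) = Num (R (regular_wl_col R d t, replicate_mset d (regular_wl_col R d t)))"

lemma nbrs_subset_verts: "nbrs G v \<subseteq> verts G"
  by (auto simp: nbrs_def)

lemma wl_col_init_plain_regular:
  assumes "finite (verts G)" "regular G d" "v \<in> verts G"
  shows "wl_col R init_plain G t v = regular_wl_col R d t"
  using assms(3)
proof (induction t arbitrary: v)
  case 0
  then show ?case by (simp add: init_plain_def)
next
  case (Suc t)
  have fin: "finite (nbrs G v)"
    using nbrs_subset_verts assms(1) by (rule finite_subset)
  have "image_mset (wl_col R init_plain G t) (mset_set (nbrs G v))
        = image_mset (\<lambda>_. regular_wl_col R d t) (mset_set (nbrs G v))"
    using Suc.IH nbrs_subset_verts[of G v] fin by (intro image_mset_cong) auto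
  also have "\<dots> = replicate_mset d (regular_wl_col R d t)"
    using assms(2) Suc.prems fin by (simp add: regular_def image_mset_const_eq)
  finally show ?case by (simp add: Suc.IH Suc.prems)
qed

lemma not_distinguishes_init_plain_regular:
  assumes "finite (verts G)" "regular G d" "finite (verts H)" "regular H d"
    and "card (verts G) = card (verts H)"
  shows "\<not> distinguishes R init_plain G H t"
proof -
  have colour_class: "{v \<in> verts K. wl_col R init_plain K s v = c}
      = (if c = regular_wl_col R d s then verts K else {})"
    if "finite (verts K)" "regular K d" for K s c
    using wl_col_init_plain_regular[OF that] by auto
  show ?thesis
    unfolding distinguishes_def colour_class[OF assms(1,2)] colour_class[OF assms(3,4)]
    using assms(5) by simp
qed

lemma distinguishes_init_F_by_copy:
  assumes "in_induced_copy F H w" "\<And>v. \<not> in_induced_copy F G v" "finite (verts H)"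
  shows "distinguishes R (init_F [F]) G H t"
proof -
  let ?class = "\<lambda>K. {v \<in> verts K. wl_col R (init_F [F]) K 0 v = Tup [True]}"
  have "?class G = {}"
    using assms(2) by (simp add: init_F_def)
  moreover have "w \<in> ?class H"
    using assms(1) by (auto simp: init_F_def in_induced_copy_def)
  then have "card (?class H) \<noteq> 0"
    using assms(3) by auto
  ultimately have "card (?class G) \<noteq> card (?class H)"
    by (metis card.empty)
  then show ?thesis
    unfolding distinguishes_def by blast
qed

lemma in_induced_copy_graph_iso:
  assumes "graph_iso G H" "in_induced_copy F H w"
  obtains v where "in_induced_copy F G v"
proof -
  obtain f where f: "bij_betw f (verts G) (verts H)"
    and f_edges: "\<forall>x\<in>verts G. \<forall>y\<in>verts G. {x, y} \<in> edges G \<longleftrightarrow> {f x, f y} \<in> edges H"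
    using assms(1) by (auto simp: graph_iso_def)
  obtain X g where X: "X \<subseteq> verts H" "w \<in> X" and g: "bij_betw g X (verts F)"
    and g_edges: "\<forall>x\<in>X. \<forall>y\<in>X. {x, y} \<in> edges H \<longleftrightarrow> {g x, g y} \<in> edges F"
    using assms(2) by (auto simp: in_induced_copy_def)
  define Y where "Y = {x \<in> verts G. f x \<in> X}"
  have "bij_betw f Y X"
    using f X(1) unfolding Y_def bij_betw_def by (auto simp: inj_on_subset)
  then have "bij_betw (g \<circ> f) Y (verts F)"
    using g by (rule bij_betw_trans)
  moreover have "\<forall>x\<in>Y. \<forall>y\<in>Y. {x, y} \<in> edges G \<longleftrightarrow> {(g \<circ> f) x, (g \<circ> f) y} \<in> edges F"
    using f_edges g_edges unfolding Y_def by auto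
  moreover have "Y \<subseteq> verts G" "inv_into (verts G) f w \<in> Y"
    using f X by (auto simp: Y_def bij_betw_def inv_into_into f_inv_into_f)
  ultimately have "in_induced_copy F G (inv_into (verts G) f w)"
    unfolding in_induced_copy_def by blast
  then show ?thesis
    by (rule that)
qed

definition graph_on :: "nat \<Rightarrow> (nat \<Rightarrow> nat \<Rightarrow> bool) \<Rightarrow> graph" where
  "graph_on n A = ({..<n}, {{x, y} | x y. x < n \<and> y < n \<and> A x y})"

lemma verts_graph_on [simp]: "verts (graph_on n A) = {..<n}"
  by (simp add: verts_def graph_on_def)

lemma edges_graph_on_iff:
  assumes "symp A"
  shows "{x, y} \<in> edges (graph_on n A) \<longleftrightarrow> x < n \<and> y < n \<and> A x y"
  using assms by (auto simp: edges_def graph_on_def doubleton_eq_iff dest: sympD)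

lemma nbrs_graph_on:
  assumes "symp A"
  shows "nbrs (graph_on n A) v = {u. u < n \<and> v < n \<and> A u v}"
  using edges_graph_on_iff[OF assms] by (auto simp: nbrs_def)

lemma simple_graph_graph_on:
  assumes "irreflp A"
  shows "simple_graph (graph_on n A)"
  using assms unfolding simple_graph_def irreflp_def
  by (auto simp: edges_def verts_def graph_on_def; metis)

definition cycle_adj :: "nat \<Rightarrow> nat \<Rightarrow> nat \<Rightarrow> nat \<Rightarrow> bool" where
  "cycle_adj a m x y \<longleftrightarrow> a \<le> x \<and> x < a + m \<and> a \<le> y \<and> y < a + m \<and>
     (y = x + 1 \<or> x = y + 1 \<or> (x = a \<and> y = a + m - 1) \<or> (y = a \<and> x = a + m - 1))"

lemma symp_cycle_adj: "symp (cycle_adj a m)"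
  by (auto simp: symp_def cycle_adj_def)

lemma irreflp_cycle_adj: "m \<ge> 2 \<Longrightarrow> irreflp (cycle_adj a m)"
  by (auto simp: irreflp_def cycle_adj_def)

lemma card_cycle_adj_nbrs:
  assumes "m \<ge> 3" "a \<le> v" "v < a + m"
  shows "card {u. cycle_adj a m u v} = 2"
proof -
  have "{u. cycle_adj a m u v}
      = {if v = a + m - 1 then a else Suc v, if v = a then a + m - 1 else v - 1}"
    using assms by (auto simp: cycle_adj_def split: if_splits)
  then show ?thesis
    using assms by (auto split: if_splits)
qed

lemma cycle_adj_triangle_free:
  assumes "m \<ge> 4" "cycle_adj a m x y" "cycle_adj a m y z" "cycle_adj a m x z"
  shows False
  using assms unfolding cycle_adj_def by arith

definition cycle_graph :: "nat \<Rightarrow> graph" where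
  "cycle_graph n = graph_on n (cycle_adj 0 n)"

abbreviation triangle :: graph where
  "triangle \<equiv> cycle_graph 3"

definition triangle_and_cycle :: "nat \<Rightarrow> graph" where
  "triangle_and_cycle n = graph_on n (\<lambda>x y. cycle_adj 0 3 x y \<or> cycle_adj 3 (n - 3) x y)"

lemma verts_cycle_graph [simp]: "verts (cycle_graph n) = {..<n}"
  by (simp add: cycle_graph_def)

lemma verts_triangle_and_cycle [simp]: "verts (triangle_and_cycle n) = {..<n}"
  by (simp add: triangle_and_cycle_def)

lemma edges_cycle_graph_iff: "{x, y} \<in> edges (cycle_graph n) \<longleftrightarrow> cycle_adj 0 n x y"
  by (auto simp: cycle_graph_def edges_graph_on_iff[OF symp_cycle_adj] cycle_adj_def)

lemma edges_triangle_and_cycle_iff: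
  "{x, y} \<in> edges (triangle_and_cycle n)
    \<longleftrightarrow> x < n \<and> y < n \<and> (cycle_adj 0 3 x y \<or> cycle_adj 3 (n - 3) x y)"
  unfolding triangle_and_cycle_def
  by (rule edges_graph_on_iff) (auto simp: symp_def intro: sympD[OF symp_cycle_adj])

lemma simple_graph_cycle_graph: "n \<ge> 2 \<Longrightarrow> simple_graph (cycle_graph n)"
  unfolding cycle_graph_def by (intro simple_graph_graph_on irreflp_cycle_adj)

lemma simple_graph_triangle_and_cycle: "n \<ge> 5 \<Longrightarrow> simple_graph (triangle_and_cycle n)"
  unfolding triangle_and_cycle_def
  by (rule simple_graph_graph_on) (auto simp: irreflp_def cycle_adj_def)

lemma regular_cycle_graph: "n \<ge> 3 \<Longrightarrow> regular (cycle_graph n) 2"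
  unfolding regular_def cycle_graph_def nbrs_graph_on[OF symp_cycle_adj]
  using card_cycle_adj_nbrs[of n 0] by (simp add: cycle_adj_def)

lemma regular_triangle_and_cycle:
  assumes "n \<ge> 6"
  shows "regular (triangle_and_cycle n) 2"
  unfolding regular_def
proof
  fix v assume "v \<in> verts (triangle_and_cycle n)"
  then have v: "v < n"
    by simp
  have "nbrs (triangle_and_cycle n) v
      = (if v < 3 then {u. cycle_adj 0 3 u v} else {u. cycle_adj 3 (n - 3) u v})"
    using v assms by (auto simp: nbrs_def edges_triangle_and_cycle_iff cycle_adj_def)
  then show "card (nbrs (triangle_and_cycle n) v) = 2"
    using v assms card_cycle_adj_nbrs[of 3 0 v] card_cycle_adj_nbrs[of "n - 3" 3 v] by simp
qed

lemma in_induced_copy_triangle_and_cycle: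
  assumes "n \<ge> 3"
  shows "in_induced_copy triangle (triangle_and_cycle n) 0"
  unfolding in_induced_copy_def
proof (intro exI conjI)
  show "{..<3} \<subseteq> verts (triangle_and_cycle n)"
    using assms by auto
  show "bij_betw id {..<3::nat} (verts triangle)"
    by simp
  show "\<forall>x\<in>{..<3}. \<forall>y\<in>{..<3}.
      {x, y} \<in> edges (triangle_and_cycle n) \<longleftrightarrow> {id x, id y} \<in> edges triangle"
    using assms by (auto simp: edges_triangle_and_cycle_iff edges_cycle_graph_iff cycle_adj_def)
qed simp

lemma in_induced_copy_triangle_obtains_triangle:
  assumes "in_induced_copy triangle G v"
  obtains x y z where "{x, y} \<in> edges G" "{y, z} \<in> edges G" "{x, z} \<in> edges G"
proof -
  obtain X f where X: "X \<subseteq> verts G" and f: "bij_betw f X {..<3}"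
    and f_edges: "\<forall>x\<in>X. \<forall>y\<in>X. {x, y} \<in> edges G \<longleftrightarrow> {f x, f y} \<in> edges triangle"
    using assms by (auto simp: in_induced_copy_def)
  define g where "g = inv_into X f"
  have g: "g i \<in> X" "f (g i) = i" if "i < 3" for i
    using f that by (auto simp: g_def bij_betw_def inv_into_into f_inv_into_f)
  have "{g i, g j} \<in> edges G" if "i < 3" "j < 3" "cycle_adj 0 3 i j" for i j
    using f_edges g[OF that(1)] g[OF that(2)] that(3) by (simp add: edges_cycle_graph_iff)
  then show ?thesis
    using that[of "g 0" "g 1" "g 2"] by (simp add: cycle_adj_def)
qed

lemma not_in_induced_copy_triangle_cycle_graph:
  assumes "n \<ge> 4"
  shows "\<not> in_induced_copy triangle (cycle_graph n) v"
  using assms cycle_adj_triangle_free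
  by (metis edges_cycle_graph_iff in_induced_copy_triangle_obtains_triangle)

theorem proposition2:
  fixes RELABEL :: "colour \<times> colour multiset \<Rightarrow> nat"
  assumes "inj RELABEL"
  shows "\<exists>k::nat. \<forall>n\<ge>6. \<exists>G H F.
    simple_graph G \<and> simple_graph H \<and> simple_graph F \<and>
    card (verts G) = n \<and> card (verts H) = n \<and> \<not> graph_iso G H \<and>
    card (verts F) = k \<and>
    (\<forall>t. \<not> distinguishes RELABEL init_plain G H t) \<and>
    distinguishes RELABEL (init_F [F]) G H 1"
proof (intro exI allI impI)
  fix n :: nat assume n: "n \<ge> 6"
  let ?G = "cycle_graph n" and ?H = "triangle_and_cycle n"
  have H_triangle: "in_induced_copy triangle ?H 0"
    using n by (intro in_induced_copy_triangle_and_cycle) simp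
  have G_triangle_free: "\<not> in_induced_copy triangle ?G v" for v
    using n by (intro not_in_induced_copy_triangle_cycle_graph) simp
  have "\<not> graph_iso ?G ?H"
    using in_induced_copy_graph_iso H_triangle G_triangle_free by metis
  moreover have "\<not> distinguishes RELABEL init_plain ?G ?H t" for t
    using n regular_cycle_graph[of n] regular_triangle_and_cycle[of n]
    by (intro not_distinguishes_init_plain_regular) simp_all
  moreover have "distinguishes RELABEL (init_F [triangle]) ?G ?H 1"
    using H_triangle G_triangle_free by (intro distinguishes_init_F_by_copy) simp_all
  ultimately show "simple_graph ?G \<and> simple_graph ?H \<and> simple_graph triangle \<and>
    card (verts ?G) = n \<and> card (verts ?H) = n \<and> \<not> graph_iso ?G ?H \<and>
    card (verts triangle) = 3 \<and>
    (\<forall>t. \<not> distinguishes RELABEL init_plain ?G ?H t) \<and>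
    distinguishes RELABEL (init_F [triangle]) ?G ?H 1"
    using n simple_graph_cycle_graph[of n] simple_graph_cycle_graph[of 3]
      simple_graph_triangle_and_cycle[of n]
    by simp
qed

end
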